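(* Fix $r\in\{0,1\}$ and $n\ge 0$. Let $\pi\in B_n$ be a hyperoctahedral involution with exactly $d$ barred two-cycles. Then the sign of its domino insertion tableau satisfies \[ \mathrm{sign}\big(P_d^r(\pi)\big)=(-1)^{d}. \]
   Context: Partitions are identified with Young diagrams in English notation: cell $(k,l)$ lies in row $k$ (rows numbered $1,2,\dots$ from top to bottom) and column $l$ (columns numbered $1,2,\dots$ from left to right). A domino is a set of two cells sharing an edge; it is vertical if both cells lie in the same column, horizontal otherwise. For $r\ge0$ let $\delta_r=(r,r-1,\dots,1)$ ($\delta_0=\emptyset$). Every partition $\lambda$ has a 2-core $\tilde\lambda$ (obtained by repeatedly removing dominoes whose removal leaves a partition, until impossible), which equals $\delta_r$ for a unique $r$. $\mathcal P_r(n)$ denotes the set of partitions with 2-core $\delta_r$ and size $|\delta_r|+2n$. A standard domino tableau (SDT) of shape $\lambda\in\mathcal P_r(n)$ is a chain of partitions $\delta_r=\lambda^0\subset\lambda^1\subset\cdots\subset\lambda^n=\lambda$ with each $\lambda^k/\lambda^{k-1}$ a domino, called the domino with value $k$. Its spin $sp(D)$ is half the number of vertical dominoes. Signed permutations: $B_n$ is the set of words $\pi=\pi_1\cdots\pi_n$ in letters from $\{1,\dots,n,\bar1,\dots,\bar n\}$ such that each $k\in[n]$ occurs exactly once, barred or unbarred. $\pi$ is an involution if for each $k\in[n]$ either $\pi_k=k$ (fixed point), $\pi_k=\bar k$ (barred fixed point), or there is $l\ne k$ with $\pi_k=l,\pi_l=k$ (two-cycle $\{k,l\}$) or with $\pi_k=\bar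 l,\pi_l=\bar k$ (barred two-cycle $\{k,l\}$). Domino insertion via growth diagrams: for $\pi\in B_n$ let $M(i,j)=1$ if $\pi_i=j$, $M(i,j)=-1$ if $\pi_i=\bar j$, $M(i,j)=0$ otherwise ($i,j\in[n]$). The growth diagram is the array of partitions $\lambda_{(i,j)}$, $1\le i,j\le n+1$, with $\lambda_{(1,j)}=\lambda_{(i,1)}=\delta_r$, and, for $i,j\in[n]$, writing $\lambda=\lambda_{(i,j)},\mu=\lambda_{(i+1,j)},\nu=\lambda_{(i,j+1)}$, $\rho=\lambda_{(i+1,j+1)}$ is determined by: (1) if $M(i,j)=1$ (then $\lambda=\mu=\nu$), $\rho$ is $\lambda$ with two cells appended to its first row; (2) if $M(i,j)=-1$ (then $\lambda=\mu=\nu$), $\rho$ is $\lambda$ with two cells appended to its first column; (3) if $M(i,j)=0$ and $\lambda=\mu$ or $\lambda=\nu$, $\rho$ is the largest of $\lambda,\mu,\nu$; (4) otherwise $M(i,j)=0$ and $\gamma=\nu/\lambda$, $\gamma'=\mu/\lambda$ are dominoes: if $\gamma\cap\gamma'=\emptyset$ then $\rho=\lambda\cup\gamma\cup\gamma'$; if $\gamma\cap\gamma'$ is a single cell $(k,l)$ then $\rho=\lambda\cup\gamma\cup\gamma'\cup\{(k+1,l+1)\}$; if $\gamma=\gamma'$ is vertical in column $l$, $\rho$ is $\lambda\cup\gamma$ with two cells appended to the bottom of column $l+1$; if $\gamma=\gamma'$ is horizontal in row $k$, $\rho$ is $\lambda\cup\gamma$ with two cells appended to the end of row $k+1$. These rules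 are well defined, and consecutive partitions in the last row and last column differ by exactly one domino. The insertion tableau $P_d^r(\pi)$ is the SDT given by the chain $\lambda_{(n+1,1)}\subset\lambda_{(n+1,2)}\subset\cdots\subset\lambda_{(n+1,n+1)}$ and the recording tableau $Q_d^r(\pi)$ is the SDT given by $\lambda_{(1,n+1)}\subset\lambda_{(2,n+1)}\subset\cdots\subset\lambda_{(n+1,n+1)}$. Sign of an SDT $D$ with 2-core $\delta_0$ or $\delta_1$: let $T(D)$ be the standard Young tableau obtained (for $r=0$) by filling the two cells of the domino with value $k$ with $2k-1,2k$, or (for $r=1$) by putting $1$ in the core cell and filling the domino with value $k$ with $2k,2k+1$, in each case the smaller number in the left (horizontal domino) or upper (vertical domino) cell. The reading word of a standard Young tableau reads the rows from top to bottom, each from left to right; $\mathrm{sign}(D)$ is the sign of the reading word of $T(D)$ as a permutation. *)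

theory Defs
  imports "HOL-Combinatorics.Permutations" "HOL-Library.Product_Lexorder"
begin

text \<open>Young diagrams as finite sets of cells (row, column), both numbered from 1
(English notation). Ordering of pairs is lexicographic (Product_Lexorder).\<close>

type_synonym cell = "nat \<times> nat"

definition staircase :: "nat \<Rightarrow> cell set" where
  "staircase r = {(k, l). 1 \<le> k \<and> 1 \<le> l \<and> k + l \<le> r + 1}"

definition row_len :: "cell set \<Rightarrow> nat \<Rightarrow> nat" where
  "row_len S k = card {l. (k, l) \<in> S}"

definition col_len :: "cell set \<Rightarrow> nat \<Rightarrow> nat" where
  "col_len S l = card {k. (k, l) \<in> S}"

definition add_row :: "cell set \<Rightarrow> nat \<Rightarrow> cell set" where
  "add_row S k = S \<union> {(k, row_len S k + 1), (k, row_len S k + 2)}"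

definition add_col :: "cell set \<Rightarrow> nat \<Rightarrow> cell set" where
  "add_col S l = S \<union> {(col_len S l + 1, l), (col_len S l + 2, l)}"

definition vertical_domino :: "cell set \<Rightarrow> bool" where
  "vertical_domino g \<longleftrightarrow> (\<exists>k l. g = {(k, l), (k + 1, l)})"

definition horizontal_domino :: "cell set \<Rightarrow> bool" where
  "horizontal_domino g \<longleftrightarrow> (\<exists>k l. g = {(k, l), (k, l + 1)})"

text \<open>Local growth rule: m = M(i,j), lam = lambda_(i,j), mu = lambda_(i+1,j),
  nu = lambda_(i,j+1); result is rho = lambda_(i+1,j+1).\<close>
definition local_rule :: "int \<Rightarrow> cell set \<Rightarrow> cell set \<Rightarrow> cell set \<Rightarrow> cell set" where
  "local_rule m lam mu nu =
    (if m = 1 then add_row lam 1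
     else if m = -1 then add_col lam 1
     else if lam = mu then nu
     else if lam = nu then mu
     else (let g = nu - lam; g' = mu - lam in
       if g \<inter> g' = {} then lam \<union> g \<union> g'
       else if card (g \<inter> g') = 1 then
         (let (k, l) = the_elem (g \<inter> g') in lam \<union> g \<union> g' \<union> {(k + 1, l + 1)})
       else if vertical_domino g then add_col (lam \<union> g) (snd (Min g) + 1)
       else add_row (lam \<union> g) (fst (Min g) + 1)))"

text \<open>Signed permutations as functions on {1..n} with values in
  {1..n} (unbarred) and {-1..-n} (barred).\<close>
definition signed_perm :: "nat \<Rightarrow> (nat \<Rightarrow> int) \<Rightarrow> bool" where
  "signed_perm n \<pi> \<longleftrightarrow>
     (\<forall>i\<in>{1..n}. \<pi> i \<noteq> 0 \<and> nat \<bar>\<pi> i\<bar> \<in> {1..n}) \<and>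
     (\<forall>k\<in>{1..n}. \<exists>!i. i \<in> {1..n} \<and> nat \<bar>\<pi> i\<bar> = k)"

definition signed_involution :: "nat \<Rightarrow> (nat \<Rightarrow> int) \<Rightarrow> bool" where
  "signed_involution n \<pi> \<longleftrightarrow> signed_perm n \<pi> \<and>
     (\<forall>k\<in>{1..n}. \<pi> k = int k \<or> \<pi> k = - int k \<or>
        (\<exists>l\<in>{1..n}. l \<noteq> k \<and> \<pi> k = int l \<and> \<pi> l = int k) \<or>
        (\<exists>l\<in>{1..n}. l \<noteq> k \<and> \<pi> k = - int l \<and> \<pi> l = - int k))"

definition barred_two_cycles :: "nat \<Rightarrow> (nat \<Rightarrow> int) \<Rightarrow> nat set set" where
  "barred_two_cycles n \<pi> = {{k, l} | k l. k \<in> {1..n} \<and> l \<in> {1..n} \<and> k \<noteq> l \<and>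
      \<pi> k = - int l \<and> \<pi> l = - int k}"

definition Mat :: "(nat \<Rightarrow> int) \<Rightarrow> nat \<Rightarrow> nat \<Rightarrow> int" where
  "Mat \<pi> i j = (if \<pi> i = int j then 1 else if \<pi> i = - int j then -1 else 0)"

text \<open>growth r pi a b is lambda_(a+1,b+1) of the growth diagram.\<close>
fun growth :: "nat \<Rightarrow> (nat \<Rightarrow> int) \<Rightarrow> nat \<Rightarrow> nat \<Rightarrow> cell set" where
  "growth r \<pi> 0 b = staircase r"
| "growth r \<pi> (Suc a) 0 = staircase r"
| "growth r \<pi> (Suc a) (Suc b) =
     local_rule (Mat \<pi> (a + 1) (b + 1)) (growth r \<pi> a b) (growth r \<pi> (Suc a) b)
       (growth r \<pi> a (Suc b))"

text \<open>A standard domino tableau with n dominoes is represented as the chain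
  D 0 \<subseteq> D 1 \<subseteq> ... \<subseteq> D n. Insertion tableau: k-th partition is lambda_(n+1,k+1).\<close>
definition insertion_tableau :: "nat \<Rightarrow> nat \<Rightarrow> (nat \<Rightarrow> int) \<Rightarrow> nat \<Rightarrow> cell set" where
  "insertion_tableau r n \<pi> k = growth r \<pi> n k"

text \<open>Young tableau T(D): core cell (r = 1) gets 1; domino with value k gets
  2k-1+r in its lexicographically smaller (left resp. upper) cell and 2k+r in the other.\<close>
definition syt_of_sdt :: "nat \<Rightarrow> (nat \<Rightarrow> cell set) \<Rightarrow> cell \<Rightarrow> nat" where
  "syt_of_sdt r D c =
     (if c \<in> D 0 then 1
      else (let k = (LEAST k. c \<in> D k) in
            if c = Min (D k - D (k - 1)) then 2 * k - 1 + r else 2 * k + r))"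

definition reading_word :: "nat \<Rightarrow> nat \<Rightarrow> (nat \<Rightarrow> cell set) \<Rightarrow> nat list" where
  "reading_word r n D = map (syt_of_sdt r D) (sorted_list_of_set (D n))"

definition word_perm :: "nat list \<Rightarrow> nat \<Rightarrow> nat" where
  "word_perm w i = (if 1 \<le> i \<and> i \<le> length w then w ! (i - 1) else i)"

definition sdt_sign :: "nat \<Rightarrow> nat \<Rightarrow> (nat \<Rightarrow> cell set) \<Rightarrow> int" where
  "sdt_sign r n D = sign (word_perm (reading_word r n D))"

end

theory Submission
  imports Defs
begin

text \<open>
  Let \<open>v(D)\<close> be the number of vertical dominoes of a standard domino tableau \<open>D\<close> that lie
  in even columns. Adding the domino with the largest value inserts the two largest letters into
  the reading word; they pass over the cells lying between the two cells of the domino in reading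
  order, which are the \<open>l - 1\<close> cells left of column \<open>l\<close> in the lower row for a vertical domino in
  column \<open>l\<close>, and no cell for a horizontal one. Hence \<open>sign D = (-1)^v(D)\<close> when the core has at
  most one cell.

  For the insertion tableau, \<open>v\<close> is read off the last row of the growth diagram. Weight every
  horizontal edge of the diagram by its vertical dominoes in even columns and every vertical edge
  by its vertical dominoes in odd columns. A case analysis of the local rules shows that around
  each square the four weights add up to \<open>[M(i,j) = -1]\<close> modulo 2. Summing over the squares
  below the diagonal, interior edges cancel and the first column carries no weight; for an
  involution the diagram is symmetric, so each diagonal square has \<open>mu = nu\<close>, which forces even
  weight on the staircase path along the diagonal. What remains is the number of entries \<open>-1\<close>
  below the diagonal, i.e. the number of barred two-cycles.
\<close>

section \<open>Young diagrams\<close>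

definition young :: "cell set \<Rightarrow> bool" where
  "young S \<longleftrightarrow> finite S \<and> (\<forall>k l. (k, l) \<in> S \<longrightarrow> 1 \<le> k \<and> 1 \<le> l) \<and>
     (\<forall>k l k' l'. (k, l) \<in> S \<longrightarrow> 1 \<le> k' \<longrightarrow> k' \<le> k \<longrightarrow> 1 \<le> l' \<longrightarrow> l' \<le> l \<longrightarrow> (k', l') \<in> S)"

lemma youngD:
  assumes "young S"
  shows "finite S" "\<And>k l. (k, l) \<in> S \<Longrightarrow> 1 \<le> k" "\<And>k l. (k, l) \<in> S \<Longrightarrow> 1 \<le> l"
    "\<And>k l k' l'. (k, l) \<in> S \<Longrightarrow> 1 \<le> k' \<Longrightarrow> k' \<le> k \<Longrightarrow> 1 \<le> l' \<Longrightarrow> l' \<le> l \<Longrightarrow> (k', l') \<in> S"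
  using assms unfolding young_def by blast+

lemma young_staircase: "young (staircase r)"
proof -
  have "staircase r \<subseteq> {1..r + 1} \<times> {1..r + 1}"
    unfolding staircase_def by auto
  then have "finite (staircase r)"
    by (rule finite_subset) simp
  then show ?thesis
    unfolding young_def staircase_def by auto
qed

lemma staircase_0: "staircase 0 = {}"
  and staircase_1: "staircase (Suc 0) = {(1, 1)}"
  unfolding staircase_def by auto

lemma card_staircase: "r \<le> 1 \<Longrightarrow> card (staircase r) = r"
  by (auto simp: le_Suc_eq staircase_0 staircase_1)

lemma young_Un: "young S \<Longrightarrow> young T \<Longrightarrow> young (S \<union> T)"
  unfolding young_def by blast

lemma young_insert:
  assumes S: "young S" and kl: "1 \<le> k" "1 \<le> l"
    and up: "k = 1 \<or> (k - 1, l) \<in> S" and left: "l = 1 \<or> (k, l - 1) \<in> S"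
  shows "young (insert (k, l) S)"
proof -
  have below: "(k', l') \<in> S" if "1 \<le> k'" "k' \<le> k" "1 \<le> l'" "l' \<le> l" "(k', l') \<noteq> (k, l)" for k' l'
  proof (cases "k' < k")
    case True
    then show ?thesis using up youngD(4)[OF S, of "k - 1" l k' l'] that by auto
  next
    case False
    then show ?thesis using left youngD(4)[OF S, of k "l - 1" k' l'] that by auto
  qed
  show ?thesis
    unfolding young_def
  proof (intro conjI allI impI)
    fix a b a' b'
    assume ab: "(a, b) \<in> insert (k, l) S" and a'b': "1 \<le> a'" "a' \<le> a" "1 \<le> b'" "b' \<le> b"
    show "(a', b') \<in> insert (k, l) S"
    proof (cases "(a, b) \<in> S")
      case True
      then show ?thesis using youngD(4)[OF S True a'b'] by simp
    next
      case False
      then show ?thesis using ab a'b' below[of a' b'] by auto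
    qed
  qed (use youngD(1-3)[OF S] kl in auto)
qed

lemma downward_closed_eq_atLeastAtMost:
  fixes X :: "nat set"
  assumes "finite X" "0 \<notin> X" "\<And>x y. x \<in> X \<Longrightarrow> 1 \<le> y \<Longrightarrow> y \<le> x \<Longrightarrow> y \<in> X"
  shows "X = {1..card X}"
proof (cases "X = {}")
  case False
  have "X = {1..Max X}"
  proof
    show "X \<subseteq> {1..Max X}"
    proof
      fix x
      assume "x \<in> X"
      then show "x \<in> {1..Max X}"
        using assms(2) Max_ge[OF assms(1)] by (cases x) auto
    qed
    show "{1..Max X} \<subseteq> X"
      using assms(3)[OF Max_in[OF assms(1) False]] by auto
  qed
  moreover have "card {1..Max X} = Max X"
    by simp
  ultimately show ?thesis
    by metis
qed simp

lemma young_row_iff: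
  assumes S: "young S" and k: "1 \<le> k"
  shows "(k, l) \<in> S \<longleftrightarrow> 1 \<le> l \<and> l \<le> row_len S k"
proof -
  have "{l. (k, l) \<in> S} \<subseteq> snd ` S"
    by force
  then have "finite {l. (k, l) \<in> S}"
    using youngD(1)[OF S] by (meson finite_imageI finite_subset)
  then have "{l. (k, l) \<in> S} = {1..row_len S k}"
    unfolding row_len_def
  proof (rule downward_closed_eq_atLeastAtMost)
    show "0 \<notin> {l. (k, l) \<in> S}"
      using youngD(3)[OF S, of k 0] by auto
    show "y \<in> {l. (k, l) \<in> S}" if "x \<in> {l. (k, l) \<in> S}" "1 \<le> y" "y \<le> x" for x y
      using youngD(4)[OF S, of k x k y] that k by simp
  qed
  then show ?thesis
    by (metis atLeastAtMost_iff mem_Collect_eq)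
qed

lemma young_col_iff:
  assumes S: "young S" and l: "1 \<le> l"
  shows "(k, l) \<in> S \<longleftrightarrow> 1 \<le> k \<and> k \<le> col_len S l"
proof -
  have "{k. (k, l) \<in> S} \<subseteq> fst ` S"
    by force
  then have "finite {k. (k, l) \<in> S}"
    using youngD(1)[OF S] by (meson finite_imageI finite_subset)
  then have "{k. (k, l) \<in> S} = {1..col_len S l}"
    unfolding col_len_def
  proof (rule downward_closed_eq_atLeastAtMost)
    show "0 \<notin> {k. (k, l) \<in> S}"
      using youngD(2)[OF S, of 0 l] by auto
    show "y \<in> {k. (k, l) \<in> S}" if "x \<in> {k. (k, l) \<in> S}" "1 \<le> y" "y \<le> x" for x y
      using youngD(4)[OF S, of x l y l] that l by simp
  qed
  then show ?thesis
    by (metis atLeastAtMost_iff mem_Collect_eq)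
qed

abbreviation vdom :: "nat \<Rightarrow> nat \<Rightarrow> cell set" where
  "vdom k l \<equiv> {(k, l), (Suc k, l)}"

abbreviation hdom :: "nat \<Rightarrow> nat \<Rightarrow> cell set" where
  "hdom k l \<equiv> {(k, l), (k, Suc l)}"

lemma young_add_row:
  assumes S: "young S" and k: "1 \<le> k" and up: "k = 1 \<or> (k - 1, row_len S k + 2) \<in> S"
  shows "young (add_row S k)" "add_row S k - S = hdom k (row_len S k + 1)"
proof -
  let ?c = "row_len S k"
  have new: "(k, ?c + 1) \<notin> S" "(k, ?c + 2) \<notin> S"
    using young_row_iff[OF S k] by auto
  have "young (insert (k, ?c + 1) S)"
  proof (rule young_insert[OF S k])
    show "k = 1 \<or> (k - 1, ?c + 1) \<in> S"
      using up youngD(2,4)[OF S, of "k - 1" "?c + 2"] by fastforce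
    show "?c + 1 = 1 \<or> (k, ?c + 1 - 1) \<in> S"
      using young_row_iff[OF S k, of ?c] by auto
  qed simp
  then have "young (insert (k, ?c + 2) (insert (k, ?c + 1) S))"
  proof (rule young_insert[OF _ k])
    show "k = 1 \<or> (k - 1, ?c + 2) \<in> insert (k, ?c + 1) S"
      using up by simp
  qed simp_all
  moreover have "add_row S k = insert (k, ?c + 2) (insert (k, ?c + 1) S)"
    by (auto simp: add_row_def)
  ultimately show "young (add_row S k)"
    by simp
  show "add_row S k - S = hdom k (?c + 1)"
    using new by (auto simp: add_row_def)
qed

lemma young_add_col:
  assumes S: "young S" and l: "1 \<le> l" and left: "l = 1 \<or> (col_len S l + 2, l - 1) \<in> S"
  shows "young (add_col S l)" "add_col S l - S = vdom (col_len S l + 1) l"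
proof -
  let ?c = "col_len S l"
  have new: "(?c + 1, l) \<notin> S" "(?c + 2, l) \<notin> S"
    using young_col_iff[OF S l] by auto
  have "young (insert (?c + 1, l) S)"
  proof (rule young_insert[OF S _ l])
    show "l = 1 \<or> (?c + 1, l - 1) \<in> S"
      using left youngD(3,4)[OF S, of "?c + 2" "l - 1"] by fastforce
    show "?c + 1 = 1 \<or> (?c + 1 - 1, l) \<in> S"
      using young_col_iff[OF S l, of ?c] by auto
  qed simp
  then have "young (insert (?c + 2, l) (insert (?c + 1, l) S))"
  proof (rule young_insert[OF _ _ l])
    show "l = 1 \<or> (?c + 2, l - 1) \<in> insert (?c + 1, l) S"
      using left by simp
  qed simp_all
  moreover have "add_col S l = insert (?c + 2, l) (insert (?c + 1, l) S)"
    by (auto simp: add_col_def)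
  ultimately show "young (add_col S l)"
    by simp
  show "add_col S l - S = vdom (?c + 1) l"
    using new by (auto simp: add_col_def)
qed

section \<open>Dominoes\<close>

definition domino :: "cell set \<Rightarrow> bool" where
  "domino g \<longleftrightarrow> vertical_domino g \<or> horizontal_domino g"

lemma domino_iff: "domino g \<longleftrightarrow> (\<exists>k l. g = vdom k l \<or> g = hdom k l)"
  unfolding domino_def vertical_domino_def horizontal_domino_def by auto

lemma domino_vdom [simp]: "domino (vdom k l)"
  and domino_hdom [simp]: "domino (hdom k l)"
  unfolding domino_iff by blast+

lemma card_domino: "domino g \<Longrightarrow> card g = 2"
  unfolding domino_iff by auto

lemma card_inter_two_cases:
  assumes "card A = 2" "card B = 2"
  shows "A \<inter> B = {} \<or> card (A \<inter> B) = 1 \<or> A = B"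
proof -
  have fin: "finite A" "finite B"
    using assms by (auto intro: card_ge_0_finite)
  have "A = B" if "card (A \<inter> B) = 2"
  proof -
    have "A \<inter> B = A" "A \<inter> B = B"
      using card_subset_eq[OF fin(1), of "A \<inter> B"] card_subset_eq[OF fin(2), of "A \<inter> B"] that assms
      by auto
    then show ?thesis by blast
  qed
  moreover have "card (A \<inter> B) \<le> 2"
    using card_mono[OF fin(1), of "A \<inter> B"] assms by simp
  moreover have "card (A \<inter> B) \<noteq> 0 \<or> A \<inter> B = {}"
    using fin by simp
  ultimately show ?thesis
    by linarith
qed

definition domino_step :: "cell set \<Rightarrow> cell set \<Rightarrow> bool" where
  "domino_step S T \<longleftrightarrow> S \<subseteq> T \<and> (T = S \<or> domino (T - S))"

lemma domino_step_refl [simp]: "domino_step S S"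
  unfolding domino_step_def by simp

lemma add_domino:
  assumes "young T" "S \<subseteq> T" "domino (T - S)"
  shows "domino_step S T" "card T = card S + 2"
proof -
  show "domino_step S T"
    unfolding domino_step_def using assms(2,3) by simp
  have "card (T - S) = card T - card S"
    using youngD(1)[OF assms(1)] assms(2) by (meson card_Diff_subset finite_subset)
  moreover have "card S \<le> card T"
    using youngD(1)[OF assms(1)] assms(2) by (rule card_mono)
  ultimately show "card T = card S + 2"
    using card_domino[OF assms(3)] by linarith
qed

lemma subset_add_row: "S \<subseteq> add_row S k"
  and subset_add_col: "S \<subseteq> add_col S l"
  unfolding add_row_def add_col_def by blast+

definition vdom_even :: "cell set \<Rightarrow> nat" where
  "vdom_even g = of_bool (\<exists>k l. g = vdom k l \<and> even l)"

definition vdom_odd :: "cell set \<Rightarrow> nat" where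
  "vdom_odd g = of_bool (\<exists>k l. g = vdom k l \<and> odd l)"

lemma vdom_even_simps [simp]:
  "vdom_even (vdom k l) = of_bool (even l)" "vdom_even (hdom k l) = 0" "vdom_even {} = 0"
  by (auto simp: vdom_even_def doubleton_eq_iff)

lemma vdom_odd_simps [simp]:
  "vdom_odd (vdom k l) = of_bool (odd l)" "vdom_odd (hdom k l) = 0" "vdom_odd {} = 0"
  by (auto simp: vdom_odd_def doubleton_eq_iff)

section \<open>The sign of a standard domino tableau\<close>

definition shift_cycle :: "nat \<Rightarrow> nat \<Rightarrow> nat \<Rightarrow> nat" where
  "shift_cycle a b i = (if a \<le> i \<and> i \<le> b then if i = a then b else i - 1 else i)"

lemma shift_cycle_sign:
  "a \<le> b \<Longrightarrow> permutation (shift_cycle a b) \<and> sign (shift_cycle a b) = (-1) ^ (b - a)"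
proof (induction "b - a" arbitrary: a)
  case 0
  then have "shift_cycle a b = id"
    by (auto simp: shift_cycle_def)
  then show ?case
    using 0 by (simp add: permutation_id sign_id)
next
  case (Suc d)
  then have "d = b - Suc a" "b - a = Suc d"
    by simp_all
  then have IH: "permutation (shift_cycle (Suc a) b) \<and> sign (shift_cycle (Suc a) b) = (-1) ^ d"
    using Suc by simp
  have split: "shift_cycle a b = shift_cycle (Suc a) b \<circ> transpose a (Suc a)"
    using Suc.hyps(2) by (auto simp: fun_eq_iff shift_cycle_def transpose_def)
  show ?case
    unfolding split \<open>b - a = Suc d\<close> using IH
    by (simp add: permutation_compose permutation_swap_id sign_compose sign_swap_id)
qed

lemma word_perm_insert_max:
  assumes "length w = m" "p \<le> m"
  shows "word_perm (take p w @ Suc m # drop p w) = word_perm w \<circ> shift_cycle (Suc p) (Suc m)"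
proof
  fix i
  show "word_perm (take p w @ Suc m # drop p w) i = (word_perm w \<circ> shift_cycle (Suc p) (Suc m)) i"
    using assms
    by (cases "i \<le> p"; cases "i = Suc p")
      (auto simp: word_perm_def shift_cycle_def nth_append min_def nth_Cons' numeral_2_eq_2)
qed

lemma insort_eq_take_drop:
  "sorted xs \<Longrightarrow> x \<notin> set xs \<Longrightarrow>
    insort x xs = take (length (filter (\<lambda>y. y < x) xs)) xs @ x
      # drop (length (filter (\<lambda>y. y < x) xs)) xs"
proof (induction xs)
  case (Cons y ys)
  show ?case
  proof (cases "x \<le> y")
    case True
    then have "filter (\<lambda>z. z < x) (y # ys) = []"
      using Cons.prems by (auto simp: filter_empty_conv)
    then show ?thesis
      using True by simp
  next
    case False
    then show ?thesis
      using Cons by simp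
  qed
qed simp

lemma card_less_plus_card_greater:
  fixes c :: "'a::linorder"
  assumes "finite S" "c \<notin> S"
  shows "card S = card {y \<in> S. y < c} + card {y \<in> S. c < y}"
proof -
  have "S = {y \<in> S. y < c} \<union> {y \<in> S. c < y}"
    using assms(2) not_less_iff_gr_or_eq by fastforce
  then show ?thesis
    using assms(1) by (metis (no_types, lifting) card_Un_disjoint disjoint_iff finite_Un
      mem_Collect_eq order_less_asym)
qed

lemma card_greater_split:
  fixes c1 c2 :: "'a::linorder"
  assumes "finite S" "c2 \<notin> S" "c1 < c2"
  shows "card {y \<in> S. c1 < y} = card {y \<in> S. c1 < y \<and> y < c2} + card {y \<in> S. c2 < y}"
proof -
  have "{y \<in> S. c1 < y} = {y \<in> S. c1 < y \<and> y < c2} \<union> {y \<in> S. c2 < y}"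
    using assms(2,3) not_less_iff_gr_or_eq by fastforce
  moreover have "card ({y \<in> S. c1 < y \<and> y < c2} \<union> {y \<in> S. c2 < y})
      = card {y \<in> S. c1 < y \<and> y < c2} + card {y \<in> S. c2 < y}"
    by (rule card_Un_disjoint) (use assms(1) in auto)
  ultimately show ?thesis
    by simp
qed

lemma sign_word_perm_insert:
  fixes f :: "'a::linorder \<Rightarrow> nat"
  assumes fin: "finite S" and c: "c \<notin> S" "f c = Suc (card S)"
    and perm: "permutation (word_perm (map f (sorted_list_of_set S)))"
  shows "permutation (word_perm (map f (sorted_list_of_set (insert c S))))"
    and "sign (word_perm (map f (sorted_list_of_set (insert c S))))
      = sign (word_perm (map f (sorted_list_of_set S))) * (-1) ^ card {y \<in> S. c < y}"
proof -
  define L where "L = sorted_list_of_set S"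
  define p where "p = card {y \<in> S. y < c}"
  define w where "w = map f L"
  have L: "sorted L" "distinct L" "set L = S" "length L = card S"
    using fin unfolding L_def by auto
  have p: "length (filter (\<lambda>y. y < c) L) = p"
    unfolding p_def using L distinct_length_filter by (metis Collect_conj_eq Int_commute Collect_mem_eq)
  have below_above: "card S = p + card {y \<in> S. c < y}"
    unfolding p_def by (rule card_less_plus_card_greater[OF fin c(1)])
  have "sorted_list_of_set (insert c S) = take p L @ c # drop p L"
    using insort_eq_take_drop[OF L(1)] L(3) c(1) p fin unfolding L_def by simp
  then have word: "map f (sorted_list_of_set (insert c S)) = take p w @ Suc (card S) # drop p w"
    unfolding w_def using c(2) by (simp add: take_map drop_map)
  have "p \<le> card S"
    using below_above by simp
  then have wp: "word_perm (map f (sorted_list_of_set (insert c S)))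
      = word_perm w \<circ> shift_cycle (Suc p) (Suc (card S))"
    and cyc: "permutation (shift_cycle (Suc p) (Suc (card S)))"
      "sign (shift_cycle (Suc p) (Suc (card S))) = (-1) ^ card {y \<in> S. c < y}"
    using word word_perm_insert_max[of w "card S" p] shift_cycle_sign[of "Suc p" "Suc (card S)"]
      below_above
    by (auto simp: w_def L(4))
  show "permutation (word_perm (map f (sorted_list_of_set (insert c S))))"
    unfolding wp using perm cyc by (simp add: w_def L_def permutation_compose)
  show "sign (word_perm (map f (sorted_list_of_set (insert c S))))
      = sign (word_perm (map f (sorted_list_of_set S))) * (-1) ^ card {y \<in> S. c < y}"
    unfolding wp using perm cyc by (simp add: w_def L_def sign_compose)
qed

definition standard_domino_tableau :: "nat \<Rightarrow> nat \<Rightarrow> (nat \<Rightarrow> cell set) \<Rightarrow> bool" where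
  "standard_domino_tableau r N D \<longleftrightarrow> D 0 = staircase r \<and>
     (\<forall>k<N. young (D (Suc k)) \<and> D k \<subseteq> D (Suc k) \<and> domino (D (Suc k) - D k))"

lemma cells_between_hdom:
  fixes a b :: nat
  shows "{y \<in> S. (a, b) < y \<and> y < (a, Suc b)} = {}"
proof -
  have "\<not> ((a, b) < y \<and> y < (a, Suc b))" for y :: cell
    by (cases y) auto
  then show ?thesis
    by blast
qed

lemma minus_one_power_parity: "even (x + y) \<Longrightarrow> (-1 :: int) ^ x = (-1) ^ y"
  by (cases "even x") (auto simp: minus_one_power_iff)

context
  fixes r N :: nat and D :: "nat \<Rightarrow> cell set"
  assumes r: "r \<le> 1" and sdt: "standard_domino_tableau r N D"
begin

lemma sdt_step: "k < N \<Longrightarrow> young (D (Suc k)) \<and> D k \<subseteq> D (Suc k) \<and> domino (D (Suc k) - D k)"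
  using sdt unfolding standard_domino_tableau_def by blast

lemma sdt_young: "k \<le> N \<Longrightarrow> young (D k)"
  using sdt sdt_step[of "k - 1"] young_staircase unfolding standard_domino_tableau_def
  by (cases k) auto

lemma sdt_mono: "i \<le> j \<Longrightarrow> j \<le> N \<Longrightarrow> D i \<subseteq> D j"
proof (induction j)
  case (Suc j)
  then show ?case
    using sdt_step[of j] by (cases "i = Suc j") auto
qed simp

lemma sdt_card: "k \<le> N \<Longrightarrow> card (D k) = r + 2 * k"
proof (induction k)
  case 0
  then show ?case
    using sdt card_staircase[OF r] unfolding standard_domino_tableau_def by simp
next
  case (Suc k)
  then show ?case
    using add_domino(2)[of "D (Suc k)" "D k"] sdt_step[of k] by simp
qed

lemma syt_of_sdt_new_domino:
  assumes k: "k < N" and c: "c \<in> D (Suc k) - D k"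
  shows "syt_of_sdt r D c
    = (if c = Min (D (Suc k) - D k) then 2 * Suc k - 1 + r else 2 * Suc k + r)"
proof -
  have "c \<notin> D 0"
    using sdt_mono[of 0 k] k c by auto
  moreover have "(LEAST j. c \<in> D j) = Suc k"
  proof (rule Least_equality)
    show "Suc k \<le> j" if "c \<in> D j" for j
      using sdt_mono[of j k] that k c by (metis DiffD2 not_less_eq_eq subset_iff less_imp_le_nat)
  qed (use c in simp)
  ultimately show ?thesis
    unfolding syt_of_sdt_def by (simp add: Let_def)
qed

lemma sign_reading_word_step:
  assumes k: "k < N" and d: "D (Suc k) - D k = {c1, c2}" and lt: "c1 < c2"
    and perm: "permutation (word_perm (reading_word r k D))"
  shows "permutation (word_perm (reading_word r (Suc k) D))"
    and "sign (word_perm (reading_word r (Suc k) D))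
      = sign (word_perm (reading_word r k D)) * (-1) ^ card {y \<in> D k. c1 < y \<and> y < c2}"
proof -
  let ?f = "syt_of_sdt r D" and ?S = "D k"
  have fin: "finite ?S"
    using youngD(1)[OF sdt_young] k by simp
  have c: "c1 \<in> D (Suc k) - D k" "c2 \<in> D (Suc k) - D k"
    using d by blast+
  have new: "c1 \<notin> ?S" "c2 \<notin> insert c1 ?S"
    using c lt by auto
  have D: "D (Suc k) = insert c2 (insert c1 ?S)"
    using d sdt_step[OF k] by blast
  have "Min (D (Suc k) - D k) = c1"
    unfolding d using lt by simp
  then have f: "?f c1 = Suc (card ?S)" "?f c2 = Suc (card (insert c1 ?S))"
    using syt_of_sdt_new_domino[OF k c(1)] syt_of_sdt_new_domino[OF k c(2)] lt new(1) fin
      sdt_card[of k] k by simp_all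
  note first = sign_word_perm_insert[OF fin new(1) f(1) perm[unfolded reading_word_def]]
  note second = sign_word_perm_insert[OF finite_insert[THEN iffD2, OF fin] new(2) f(2) first(1)]
  show "permutation (word_perm (reading_word r (Suc k) D))"
    using second(1) unfolding reading_word_def D .
  have "{y \<in> insert c1 ?S. c2 < y} = {y \<in> ?S. c2 < y}"
    using lt by auto
  then have exponent: "card {y \<in> ?S. c1 < y} + card {y \<in> insert c1 ?S. c2 < y}
      = card {y \<in> ?S. c1 < y \<and> y < c2} + 2 * card {y \<in> ?S. c2 < y}"
    using card_greater_split[OF fin _ lt] new by simp
  have "(-1 :: int) ^ card {y \<in> ?S. c1 < y} * (-1) ^ card {y \<in> insert c1 ?S. c2 < y}
      = (-1) ^ card {y \<in> ?S. c1 < y \<and> y < c2}"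
    unfolding power_add[symmetric] exponent by (simp add: power_add power_mult)
  then show "sign (word_perm (reading_word r (Suc k) D))
      = sign (word_perm (reading_word r k D)) * (-1) ^ card {y \<in> ?S. c1 < y \<and> y < c2}"
    using first(2) second(2) unfolding reading_word_def D by (simp add: mult.assoc)
qed

lemma cells_between_vdom:
  assumes k: "k < N" and d: "D (Suc k) - D k = vdom a b"
  shows "card {y \<in> D k. (a, b) < y \<and> y < (Suc a, b)} = b - 1"
proof -
  have yk: "young (D k)" and ySk: "young (D (Suc k))"
    using sdt_young k sdt_step[OF k] by auto
  have ab: "(a, b) \<in> D (Suc k)" "(a, b) \<notin> D k" "(Suc a, b) \<in> D (Suc k)"
    using d by auto
  have pos: "1 \<le> a" "1 \<le> b"
    using youngD(2,3)[OF ySk ab(1)] by auto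
  have "{y \<in> D k. (a, b) < y \<and> y < (Suc a, b)} = (\<lambda>l. (Suc a, l)) ` {1..<b}"
  proof (intro equalityI subsetI)
    fix y
    assume y: "y \<in> {y \<in> D k. (a, b) < y \<and> y < (Suc a, b)}"
    obtain y1 y2 where yy: "y = (y1, y2)"
      by fastforce
    have "y1 \<noteq> a"
      using y yy youngD(4)[OF yk, of a y2 a b] ab(2) pos by auto
    then show "y \<in> (\<lambda>l. (Suc a, l)) ` {1..<b}"
      using y yy youngD(3)[OF yk, of y1 y2] by auto
  next
    fix y
    assume "y \<in> (\<lambda>l. (Suc a, l)) ` {1..<b}"
    then obtain l where l: "y = (Suc a, l)" "1 \<le> l" "l < b"
      by auto
    have "(Suc a, l) \<in> D (Suc k)"
      using youngD(4)[OF ySk ab(3), of "Suc a" l] l by simp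
    moreover have "(Suc a, l) \<notin> D (Suc k) - D k"
      using d l by auto
    ultimately show "y \<in> {y \<in> D k. (a, b) < y \<and> y < (Suc a, b)}"
      using l by simp
  qed
  then show ?thesis
    by (simp add: card_image inj_on_def)
qed

lemma word_perm_reading_word_0: "word_perm (reading_word r 0 D) = id"
proof (cases r)
  case 0
  then have "reading_word r 0 D = []"
    using sdt unfolding standard_domino_tableau_def reading_word_def by (simp add: staircase_0)
  then show ?thesis
    by (auto simp: word_perm_def)
next
  case (Suc r')
  then have "r = 1"
    using r by simp
  then have "D 0 = {(1, 1)}"
    using sdt unfolding standard_domino_tableau_def by (simp add: staircase_1)
  then have "reading_word r 0 D = [1]"
    unfolding reading_word_def syt_of_sdt_def by simp
  then show ?thesis
    by (auto simp: word_perm_def)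
qed

lemma sign_reading_word:
  "k \<le> N \<Longrightarrow> permutation (word_perm (reading_word r k D))
     \<and> sign (word_perm (reading_word r k D)) = (-1) ^ (\<Sum>j<k. vdom_even (D (Suc j) - D j))"
proof (induction k)
  case 0
  then show ?case
    by (simp add: word_perm_reading_word_0 permutation_id sign_id)
next
  case (Suc k)
  then have k: "k < N"
    by simp
  have IH: "permutation (word_perm (reading_word r k D))"
    "sign (word_perm (reading_word r k D)) = (-1) ^ (\<Sum>j<k. vdom_even (D (Suc j) - D j))"
    using Suc by auto
  obtain a b where "D (Suc k) - D k = vdom a b \<or> D (Suc k) - D k = hdom a b"
    using sdt_step[OF k] unfolding domino_iff by blast
  then have "permutation (word_perm (reading_word r (Suc k) D))
    \<and> sign (word_perm (reading_word r (Suc k) D))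
      = sign (word_perm (reading_word r k D)) * (-1) ^ vdom_even (D (Suc k) - D k)"
  proof
    assume v: "D (Suc k) - D k = vdom a b"
    note step = sign_reading_word_step[OF k v _ IH(1)]
    have "1 \<le> b"
      using youngD(3)[of "D (Suc k)" a b] sdt_step[OF k] v by blast
    then have "(-1 :: int) ^ (b - 1) = (-1) ^ vdom_even (vdom a b)"
      by (intro minus_one_power_parity) auto
    then show ?thesis
      using step cells_between_vdom[OF k v] v by simp
  next
    assume h: "D (Suc k) - D k = hdom a b"
    then show ?thesis
      using sign_reading_word_step[OF k h _ IH(1)] cells_between_hdom by simp
  qed
  then show ?case
    using IH(2) by (simp add: power_add)
qed

end

theorem sdt_sign_eq_vdom_even:
  assumes "r \<le> 1" "standard_domino_tableau r N D"
  shows "sdt_sign r N D = (-1) ^ (\<Sum>k<N. vdom_even (D (Suc k) - D k))"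
  using sign_reading_word[OF assms order_refl] unfolding sdt_sign_def by simp

section \<open>The local rules\<close>

text \<open>The arguments \<open>lam\<close>, \<open>mu\<close>, \<open>nu\<close>, \<open>rho\<close> are the partitions at positions \<open>(i, j)\<close>,
  \<open>(i + 1, j)\<close>, \<open>(i, j + 1)\<close>, \<open>(i + 1, j + 1)\<close> of the growth diagram, so \<open>mu - lam\<close> and
  \<open>rho - nu\<close> sit on vertical edges, \<open>nu - lam\<close> and \<open>rho - mu\<close> on horizontal ones.\<close>

definition good_square :: "int \<Rightarrow> cell set \<Rightarrow> cell set \<Rightarrow> cell set \<Rightarrow> cell set \<Rightarrow> bool" where
  "good_square m lam mu nu rho \<longleftrightarrow>
     young rho \<and> domino_step mu rho \<and> domino_step nu rho \<and>
     card rho + card lam = card mu + card nu + (if m = 0 then 0 else 2) \<and>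
     even (vdom_odd (mu - lam) + vdom_even (rho - mu) + vdom_even (nu - lam) + vdom_odd (rho - nu)
       + of_bool (m = -1)) \<and>
     (mu = nu \<longrightarrow> even (vdom_odd (mu - lam) + vdom_even (rho - mu)))"

lemma good_square_plus_one:
  assumes "young lam"
  shows "good_square 1 lam lam lam (add_row lam 1)"
proof -
  have row: "young (add_row lam 1)" "add_row lam 1 - lam = hdom 1 (row_len lam 1 + 1)"
    using young_add_row[OF assms] by simp_all
  have "domino (add_row lam 1 - lam)"
    unfolding row(2) by (rule domino_hdom)
  note add = add_domino[OF row(1) subset_add_row this]
  show ?thesis
    unfolding good_square_def using row add by simp
qed

lemma good_square_minus_one:
  assumes "young lam"
  shows "good_square (-1) lam lam lam (add_col lam 1)"
proof -
  have col: "young (add_col lam 1)" "add_col lam 1 - lam = vdom (col_len lam 1 + 1) 1"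
    using young_add_col[OF assms] by simp_all
  have "domino (add_col lam 1 - lam)"
    unfolding col(2) by (rule domino_vdom)
  note add = add_domino[OF col(1) subset_add_col this]
  show ?thesis
    unfolding good_square_def using col add by simp
qed

lemma good_square_left_edge_trivial:
  assumes "young nu" "domino_step lam nu"
  shows "good_square 0 lam lam nu nu"
  using assms unfolding good_square_def by auto

lemma good_square_top_edge_trivial:
  assumes "young mu" "domino_step lam mu"
  shows "good_square 0 lam mu lam mu"
  using assms unfolding good_square_def by auto

lemma good_square_disjoint:
  assumes "young mu" "young nu" "lam \<subseteq> mu" "lam \<subseteq> nu" "domino (mu - lam)" "domino (nu - lam)"
    and disj: "(nu - lam) \<inter> (mu - lam) = {}"
  shows "good_square 0 lam mu nu (mu \<union> nu)"
proof -
  have diff: "(mu \<union> nu) - mu = nu - lam" "(mu \<union> nu) - nu = mu - lam"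
    using assms(3,4) disj by auto
  have "mu \<noteq> nu"
  proof
    assume "mu = nu"
    then have "nu - lam = {}"
      using disj by blast
    then show False
      using card_domino[OF assms(6)] by (metis card.empty zero_neq_numeral)
  qed
  moreover have "card (mu \<union> nu) + card lam = card mu + card nu"
  proof -
    have "mu \<inter> nu = lam"
      using assms(3,4) disj by blast
    then show ?thesis
      using card_Un_Int[OF youngD(1)[OF assms(1)] youngD(1)[OF assms(2)]] by simp
  qed
  moreover have "domino_step mu (mu \<union> nu)" "domino_step nu (mu \<union> nu)"
    unfolding domino_step_def diff using assms(5,6) by auto
  moreover have "even (vdom_odd (mu - lam) + vdom_even (nu - lam) + vdom_even (nu - lam)
      + vdom_odd (mu - lam))"
    by presburger
  ultimately show ?thesis
    unfolding good_square_def diff using young_Un[OF assms(1,2)] by simp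
qed

lemma block_completion:
  assumes yX: "young X" and yY: "young Y" and sX: "lam \<subseteq> X" and sY: "lam \<subseteq> Y"
    and dX: "X - lam = hdom k l" and dY: "Y - lam = vdom k l"
  defines "R \<equiv> insert (Suc k, Suc l) (X \<union> Y)"
  shows "young R" "R - X = hdom (Suc k) l" "R - Y = vdom k (Suc l)"
    and "card R + card lam = card X + card Y" "domino_step X R" "domino_step Y R"
proof -
  have X: "X = lam \<union> hdom k l" and Y: "Y = lam \<union> vdom k l"
    using dX dY sX sY by auto
  have kl: "(k, l) \<notin> lam" "(Suc k, l) \<notin> lam" "(k, Suc l) \<notin> lam"
    using dX dY by auto
  have pos: "1 \<le> k" "1 \<le> l"
    using youngD(2,3)[OF yX, of k l] X by auto
  have corner: "(Suc k, Suc l) \<notin> X \<union> Y"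
    using youngD(4)[OF yX, of "Suc k" "Suc l" "Suc k" l]
      youngD(4)[OF yY, of "Suc k" "Suc l" k "Suc l"]
      X Y kl pos by auto
  show "young R"
    unfolding R_def by (rule young_insert[OF young_Un[OF yX yY]]) (use X Y in auto)
  show RX: "R - X = hdom (Suc k) l" and RY: "R - Y = vdom k (Suc l)"
    unfolding R_def using X Y kl corner by auto
  have "X \<inter> Y = insert (k, l) lam" "(k, l) \<notin> lam"
    using X Y kl by auto
  then have "card (X \<union> Y) + card lam + 1 = card X + card Y"
    using card_Un_Int[OF youngD(1)[OF yX] youngD(1)[OF yY]] youngD(1)[OF yX] sX
    by (simp add: finite_subset)
  then show "card R + card lam = card X + card Y"
    unfolding R_def using corner youngD(1)[OF yX] youngD(1)[OF yY] by simp
  show "domino_step X R" "domino_step Y R"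
    unfolding domino_step_def RX RY unfolding R_def by auto
qed

lemma good_square_corner:
  assumes "young mu" "young nu" "lam \<subseteq> mu" "lam \<subseteq> nu"
    and shape: "(nu - lam = hdom k l \<and> mu - lam = vdom k l) \<or>
      (nu - lam = vdom k l \<and> mu - lam = hdom k l)"
  shows "good_square 0 lam mu nu (insert (Suc k, Suc l) (mu \<union> nu))"
  using shape
proof
  assume shape: "nu - lam = hdom k l \<and> mu - lam = vdom k l"
  note B = block_completion[OF assms(2,1,4,3) shape[THEN conjunct1] shape[THEN conjunct2]]
  have "mu \<noteq> nu"
    using shape by (auto simp: doubleton_eq_iff)
  then show ?thesis
    using B shape unfolding good_square_def by (simp add: Un_commute)
next
  assume shape: "nu - lam = vdom k l \<and> mu - lam = hdom k l"
  note B = block_completion[OF assms(1,2,3,4) shape[THEN conjunct2] shape[THEN conjunct1]]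
  have "mu \<noteq> nu"
    using shape by (auto simp: doubleton_eq_iff)
  then show ?thesis
    using B shape unfolding good_square_def by simp
qed

lemma good_square_same_vdom:
  assumes yl: "young lam" and ym: "young mu" and sub: "lam \<subseteq> mu" and d: "mu - lam = vdom k l"
  shows "good_square 0 lam mu mu (add_col mu (Suc l))"
proof -
  let ?c = "col_len mu (Suc l)"
  have pos: "1 \<le> k" "1 \<le> l"
    using youngD(2,3)[OF ym, of k l] d by auto
  have "(k, Suc l) \<notin> lam"
    using youngD(4)[OF yl, of k "Suc l" k l] d pos by auto
  moreover have "(k, Suc l) \<notin> mu - lam"
    unfolding d by simp
  ultimately have "(k, Suc l) \<notin> mu"
    by blast
  then have "?c < k"
    using young_col_iff[OF ym, of "Suc l" k] pos by auto
  then have "(?c + 2, l) \<in> mu"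
    using youngD(4)[OF ym, of "Suc k" l "?c + 2" l] d pos by auto
  then have col: "young (add_col mu (Suc l))" "add_col mu (Suc l) - mu = vdom (?c + 1) (Suc l)"
    using young_add_col[OF ym, of "Suc l"] by simp_all
  have "domino (add_col mu (Suc l) - mu)"
    unfolding col(2) by (rule domino_vdom)
  note step = add_domino[OF col(1) subset_add_col this]
  have "card mu = card lam + 2"
    using add_domino(2)[OF ym sub] d by simp
  then show ?thesis
    unfolding good_square_def using col step d by simp
qed

lemma good_square_same_hdom:
  assumes yl: "young lam" and ym: "young mu" and sub: "lam \<subseteq> mu" and d: "mu - lam = hdom k l"
  shows "good_square 0 lam mu mu (add_row mu (Suc k))"
proof -
  let ?c = "row_len mu (Suc k)"
  have pos: "1 \<le> k" "1 \<le> l"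
    using youngD(2,3)[OF ym, of k l] d by auto
  have "(Suc k, l) \<notin> lam"
    using youngD(4)[OF yl, of "Suc k" l k l] d pos by auto
  moreover have "(Suc k, l) \<notin> mu - lam"
    unfolding d by simp
  ultimately have "(Suc k, l) \<notin> mu"
    by blast
  then have "?c < l"
    using young_row_iff[OF ym, of "Suc k" l] pos by auto
  then have "(k, ?c + 2) \<in> mu"
    using youngD(4)[OF ym, of k "Suc l" k "?c + 2"] d pos by auto
  then have row: "young (add_row mu (Suc k))" "add_row mu (Suc k) - mu = hdom (Suc k) (?c + 1)"
    using young_add_row[OF ym, of "Suc k"] by simp_all
  have "domino (add_row mu (Suc k) - mu)"
    unfolding row(2) by (rule domino_hdom)
  note step = add_domino[OF row(1) subset_add_row this]
  have "card mu = card lam + 2"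
    using add_domino(2)[OF ym sub] d by simp
  then show ?thesis
    unfolding good_square_def using row step d by simp
qed

lemma domino_corner_mem:
  assumes yZ: "young Z" and yY: "young Y" and dY: "Y - lam = vdom k l \<or> Y - lam = hdom k l"
    and x: "x \<in> Y - lam" "x \<in> Z - lam"
  shows "(k, l) \<in> (Y - lam) \<inter> (Z - lam)"
proof -
  obtain a b where ab: "x = (a, b)"
    by fastforce
  have kl: "(k, l) \<in> Y - lam" and "x \<in> vdom k l \<or> x \<in> hdom k l"
    using dY x(1) by auto
  then have "k \<le> a" "l \<le> b" "1 \<le> k" "1 \<le> l"
    using youngD(2,3)[OF yY, of k l] ab by auto
  then have "(k, l) \<in> Z"
    using youngD(4)[OF yZ, of a b k l] x ab by simp
  then show ?thesis
    using kl by simp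
qed

lemma domino_overlap_shape:
  assumes ym: "young mu" and yn: "young nu" and dm: "domino (mu - lam)" and dn: "domino (nu - lam)"
    and x: "(nu - lam) \<inter> (mu - lam) = {x}"
  shows "(nu - lam = hdom (fst x) (snd x) \<and> mu - lam = vdom (fst x) (snd x)) \<or>
    (nu - lam = vdom (fst x) (snd x) \<and> mu - lam = hdom (fst x) (snd x))"
proof -
  obtain k l where g: "nu - lam = vdom k l \<or> nu - lam = hdom k l"
    using dn unfolding domino_iff by blast
  obtain k' l' where g': "mu - lam = vdom k' l' \<or> mu - lam = hdom k' l'"
    using dm unfolding domino_iff by blast
  have "x \<in> nu - lam" "x \<in> mu - lam"
    using x by auto
  then have "(k, l) \<in> (nu - lam) \<inter> (mu - lam)" "(k', l') \<in> (mu - lam) \<inter> (nu - lam)"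
    using domino_corner_mem[OF ym yn g] domino_corner_mem[OF yn ym g'] by blast+
  then have "x = (k, l)" "k' = k" "l' = l"
    using x by auto
  moreover have "nu - lam \<noteq> mu - lam"
  proof
    assume "nu - lam = mu - lam"
    then have "card ((nu - lam) \<inter> (mu - lam)) = 2"
      using card_domino[OF dn] by simp
    then show False
      using x by simp
  qed
  ultimately show ?thesis
    using g g' by (metis fst_conv snd_conv)
qed

lemma vertical_domino_vdom: "vertical_domino (vdom k l)"
  and not_vertical_domino_hdom: "\<not> vertical_domino (hdom k l)"
  unfolding vertical_domino_def by (auto simp: doubleton_eq_iff)

lemma Min_vdom: "Min (vdom k l) = (k, l)"
  and Min_hdom: "Min (hdom k l) = (k, l)"
  by (simp_all add: less_eq_prod_def)

lemma local_rule_swap: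
  assumes "domino_step lam mu" "domino_step lam nu"
  shows "local_rule m lam nu mu = local_rule m lam mu nu"
proof (cases "m = 1 \<or> m = -1 \<or> lam = mu \<or> lam = nu \<or> mu = nu")
  case True
  then show ?thesis
    by (auto simp: local_rule_def)
next
  case False
  then have "domino (nu - lam)" "domino (mu - lam)" "nu - lam \<noteq> mu - lam"
    using assms unfolding domino_step_def by auto
  then have "(nu - lam) \<inter> (mu - lam) = {} \<or> card ((nu - lam) \<inter> (mu - lam)) = 1"
    using card_inter_two_cases[OF card_domino card_domino] by blast
  then show ?thesis
    using False by (auto simp: local_rule_def Let_def Int_commute Un_ac)
qed

lemma good_square_same_domino:
  assumes yl: "young lam" and ym: "young mu" and sm: "lam \<subseteq> mu" and dm: "domino (mu - lam)"
  shows "good_square 0 lam mu mu (local_rule 0 lam mu mu)"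
proof -
  have "mu - lam \<noteq> {}"
    using card_domino[OF dm] by (metis card.empty zero_neq_numeral)
  then have "lam \<noteq> mu" "(mu - lam) \<inter> (mu - lam) \<noteq> {}" "card ((mu - lam) \<inter> (mu - lam)) \<noteq> 1"
    using card_domino[OF dm] by auto
  then have rule: "local_rule 0 lam mu mu = (if vertical_domino (mu - lam)
      then add_col mu (snd (Min (mu - lam)) + 1) else add_row mu (fst (Min (mu - lam)) + 1))"
    unfolding local_rule_def Let_def using sm by (simp add: Un_absorb1)
  obtain k l where "mu - lam = vdom k l \<or> mu - lam = hdom k l"
    using dm unfolding domino_iff by blast
  then show ?thesis
  proof
    assume v: "mu - lam = vdom k l"
    then show ?thesis
      using rule good_square_same_vdom[OF yl ym sm v] vertical_domino_vdom Min_vdom by simp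
  next
    assume h: "mu - lam = hdom k l"
    then show ?thesis
      using rule good_square_same_hdom[OF yl ym sm h] not_vertical_domino_hdom Min_hdom by simp
  qed
qed

lemma good_square_two_dominoes:
  assumes yl: "young lam" and ym: "young mu" and yn: "young nu"
    and sm: "lam \<subseteq> mu" and sn: "lam \<subseteq> nu" and dm: "domino (mu - lam)" and dn: "domino (nu - lam)"
  shows "good_square 0 lam mu nu (local_rule 0 lam mu nu)"
proof -
  define g g' where "g = nu - lam" and "g' = mu - lam"
  have "lam \<noteq> mu" "lam \<noteq> nu"
    using card_domino[OF dm] card_domino[OF dn] by auto
  then have rule: "local_rule 0 lam mu nu =
      (if g \<inter> g' = {} then lam \<union> g \<union> g'
       else if card (g \<inter> g') = 1 then
         (let (k, l) = the_elem (g \<inter> g') in lam \<union> g \<union> g' \<union> {(k + 1, l + 1)})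
       else if vertical_domino g then add_col (lam \<union> g) (snd (Min g) + 1)
       else add_row (lam \<union> g) (fst (Min g) + 1))"
    unfolding local_rule_def g_def g'_def by (simp add: Let_def)
  have union: "lam \<union> g \<union> g' = mu \<union> nu" "lam \<union> g = nu" "lam \<union> g' = mu"
    using sm sn unfolding g_def g'_def by auto
  consider (disjoint) "g \<inter> g' = {}" | (corner) "card (g \<inter> g') = 1" | (equal) "g = g'"
    using card_inter_two_cases[OF card_domino[OF dn] card_domino[OF dm]]
    unfolding g_def g'_def by blast
  then show ?thesis
  proof cases
    case disjoint
    then show ?thesis
      using good_square_disjoint[OF ym yn sm sn dm dn] rule union unfolding g_def g'_def by simp
  next
    case corner
    then obtain x where x: "g \<inter> g' = {x}"
      by (rule card_1_singletonE)
    have "local_rule 0 lam mu nu = insert (Suc (fst x), Suc (snd x)) (mu \<union> nu)"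
      using rule corner x union by (auto simp: case_prod_beta)
    then show ?thesis
      using good_square_corner[OF ym yn sm sn domino_overlap_shape[OF ym yn dm dn]] x
      unfolding g_def g'_def by simp
  next
    case equal
    then have "mu = nu"
      using union by simp
    then show ?thesis
      using good_square_same_domino[OF yl ym sm dm] by simp
  qed
qed

lemma good_square_local_rule:
  assumes yl: "young lam" and ym: "young mu" and yn: "young nu"
    and sm: "domino_step lam mu" and sn: "domino_step lam nu"
    and m: "m \<in> {-1, 0, 1}" and entry: "m \<noteq> 0 \<Longrightarrow> mu = lam \<and> nu = lam"
  shows "good_square m lam mu nu (local_rule m lam mu nu)"
proof -
  consider "m = 1" | "m = -1" | "m = 0" "lam = mu" | "m = 0" "lam \<noteq> mu" "lam = nu"
    | "m = 0" "lam \<noteq> mu" "lam \<noteq> nu"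
    using m by auto
  then show ?thesis
  proof cases
    case 1
    then show ?thesis
      using good_square_plus_one[OF yl] entry by (simp add: local_rule_def)
  next
    case 2
    then show ?thesis
      using good_square_minus_one[OF yl] entry by (simp add: local_rule_def)
  next
    case 3
    then show ?thesis
      using good_square_left_edge_trivial[OF yn sn] by (simp add: local_rule_def)
  next
    case 4
    then show ?thesis
      using good_square_top_edge_trivial[OF ym sm] by (simp add: local_rule_def)
  next
    case 5
    then show ?thesis
      using good_square_two_dominoes[OF yl ym yn] sm sn unfolding domino_step_def by auto
  qed
qed

section \<open>The growth diagram\<close>

lemma growth_0 [simp]: "growth r \<pi> a 0 = staircase r"
  by (cases a) simp_all

lemma Mat_cases: "Mat \<pi> i j \<in> {-1, 0, 1}"
  unfolding Mat_def by auto

lemma Mat_eq_0_iff: "1 \<le> j \<Longrightarrow> Mat \<pi> i j = 0 \<longleftrightarrow> \<bar>\<pi> i\<bar> \<noteq> int j"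
  unfolding Mat_def by auto

lemma growth_row_stationary:
  "(\<forall>j\<in>{1..b}. Mat \<pi> (Suc a) j = 0) \<Longrightarrow> growth r \<pi> (Suc a) b = growth r \<pi> a b"
  by (induction b) (simp_all add: local_rule_def)

lemma growth_col_stationary:
  "(\<forall>i\<in>{1..a}. Mat \<pi> i (Suc b) = 0) \<Longrightarrow> growth r \<pi> a (Suc b) = growth r \<pi> a b"
  by (induction a) (auto simp: local_rule_def)

declare growth.simps(3) [simp del]

lemma growth_Suc_Suc:
  "growth r \<pi> (Suc a) (Suc b) =
     local_rule (Mat \<pi> (Suc a) (Suc b)) (growth r \<pi> a b) (growth r \<pi> (Suc a) b)
       (growth r \<pi> a (Suc b))"
  by (simp add: growth.simps(3))

context
  fixes n :: nat and \<pi> :: "nat \<Rightarrow> int"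
  assumes perm: "signed_perm n \<pi>"
begin

lemma signed_perm_abs_inj: "i \<in> {1..n} \<Longrightarrow> i' \<in> {1..n} \<Longrightarrow> \<bar>\<pi> i\<bar> = \<bar>\<pi> i'\<bar> \<Longrightarrow> i = i'"
  using perm unfolding signed_perm_def by (metis nat_int)

lemma signed_perm_abs_surj: "j \<in> {1..n} \<Longrightarrow> \<exists>i\<in>{1..n}. \<bar>\<pi> i\<bar> = int j"
  using perm unfolding signed_perm_def by (metis abs_ge_zero int_nat_eq)

text \<open>A nonzero entry is the only one in its row and column, so it meets the empty square
  \<open>lam = mu = nu\<close> that the growth rules (1) and (2) presuppose.\<close>

lemma growth_at_nonzero_entry:
  assumes "a < n" "b < n" "Mat \<pi> (Suc a) (Suc b) \<noteq> 0"
  shows "growth r \<pi> (Suc a) b = growth r \<pi> a b" "growth r \<pi> a (Suc b) = growth r \<pi> a b"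
proof -
  have entry: "\<bar>\<pi> (Suc a)\<bar> = int (Suc b)"
    using assms(3) Mat_eq_0_iff[of "Suc b" \<pi> "Suc a"] by simp
  have "\<forall>j\<in>{1..b}. Mat \<pi> (Suc a) j = 0"
    using entry by (auto simp: Mat_eq_0_iff)
  then show "growth r \<pi> (Suc a) b = growth r \<pi> a b"
    by (rule growth_row_stationary)
  have "\<forall>i\<in>{1..a}. Mat \<pi> i (Suc b) = 0"
    using entry signed_perm_abs_inj[of _ "Suc a"] assms(1) by (force simp: Mat_eq_0_iff)
  then show "growth r \<pi> a (Suc b) = growth r \<pi> a b"
    by (rule growth_col_stationary)
qed

lemma good_square_growth:
  "a < n \<Longrightarrow> b < n \<Longrightarrow> good_square (Mat \<pi> (Suc a) (Suc b)) (growth r \<pi> a b) (growth r \<pi> (Suc a) b)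
     (growth r \<pi> a (Suc b)) (growth r \<pi> (Suc a) (Suc b))"
proof (induction "a + b" arbitrary: a b rule: less_induct)
  case less
  let ?G = "growth r \<pi>"
  have young_corner: "young (?G a' b')" if "a' + b' \<le> Suc (a + b)" "a' \<le> n" "b' \<le> n" for a' b'
  proof (cases "a' = 0 \<or> b' = 0")
    case True
    then show ?thesis
      using young_staircase by auto
  next
    case False
    then obtain a'' b'' where "a' = Suc a''" "b' = Suc b''"
      by (meson not0_implies_Suc)
    then show ?thesis
      using less.hyps[of a'' b''] that unfolding good_square_def by auto
  qed
  have down: "domino_step (?G a b) (?G (Suc a) b)"
  proof (cases b)
    case (Suc b')
    then show ?thesis
      using less.hyps[of a b'] less.prems unfolding good_square_def by auto
  qed simp
  have right: "domino_step (?G a b) (?G a (Suc b))"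
  proof (cases a)
    case (Suc a')
    then show ?thesis
      using less.hyps[of a' b] less.prems unfolding good_square_def by auto
  qed simp
  show ?case
    unfolding growth_Suc_Suc
    by (rule good_square_local_rule[OF young_corner young_corner young_corner down right Mat_cases])
      (use less.prems growth_at_nonzero_entry in auto)
qed

lemma young_growth: "a \<le> n \<Longrightarrow> b \<le> n \<Longrightarrow> young (growth r \<pi> a b)"
proof (cases "a = 0 \<or> b = 0")
  case False
  then obtain a' b' where "a = Suc a'" "b = Suc b'"
    by (meson not0_implies_Suc)
  then show "a \<le> n \<Longrightarrow> b \<le> n \<Longrightarrow> ?thesis"
    using good_square_growth[of a' b'] unfolding good_square_def by auto
qed (auto simp: young_staircase)

lemma growth_step_down: "a < n \<Longrightarrow> b \<le> n \<Longrightarrow> domino_step (growth r \<pi> a b) (growth r \<pi> (Suc a) b)"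
proof (cases b)
  case (Suc b')
  then show "a < n \<Longrightarrow> b \<le> n \<Longrightarrow> ?thesis"
    using good_square_growth[of a b'] unfolding good_square_def by auto
qed simp

lemma growth_step_right: "a \<le> n \<Longrightarrow> b < n \<Longrightarrow> domino_step (growth r \<pi> a b) (growth r \<pi> a (Suc b))"
proof (cases a)
  case (Suc a')
  then show "a \<le> n \<Longrightarrow> b < n \<Longrightarrow> ?thesis"
    using good_square_growth[of a' b] unfolding good_square_def by auto
qed simp

lemma growth_card_less:
  assumes "a \<le> n" "b < n" "i \<in> {1..a}" "Mat \<pi> i (Suc b) \<noteq> 0"
  shows "card (growth r \<pi> a b) < card (growth r \<pi> a (Suc b))"
  using assms
proof (induction a)
  case (Suc a)
  have "card (growth r \<pi> (Suc a) (Suc b)) + card (growth r \<pi> a b)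
      = card (growth r \<pi> (Suc a) b) + card (growth r \<pi> a (Suc b))
        + (if Mat \<pi> (Suc a) (Suc b) = 0 then 0 else 2)"
    using good_square_growth[of a b] Suc.prems unfolding good_square_def by auto
  moreover have "card (growth r \<pi> a b) < card (growth r \<pi> a (Suc b))" if "i \<noteq> Suc a"
    using Suc that by auto
  moreover have "growth r \<pi> (Suc a) b = growth r \<pi> a b" "growth r \<pi> a (Suc b) = growth r \<pi> a b"
    if "i = Suc a"
    using growth_at_nonzero_entry[of a b] Suc.prems that by auto
  ultimately show ?case
    using Suc.prems by (cases "i = Suc a") auto
qed simp

lemma growth_last_row_domino:
  assumes "b < n"
  shows "growth r \<pi> n b \<subseteq> growth r \<pi> n (Suc b)" "domino (growth r \<pi> n (Suc b) - growth r \<pi> n b)"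
proof -
  obtain i where "i \<in> {1..n}" "Mat \<pi> i (Suc b) \<noteq> 0"
    using signed_perm_abs_surj[of "Suc b"] assms by (auto simp: Mat_eq_0_iff)
  then have "card (growth r \<pi> n b) < card (growth r \<pi> n (Suc b))"
    using growth_card_less assms by auto
  then have "growth r \<pi> n b \<noteq> growth r \<pi> n (Suc b)"
    by auto
  then show "growth r \<pi> n b \<subseteq> growth r \<pi> n (Suc b)" "domino (growth r \<pi> n (Suc b) - growth r \<pi> n b)"
    using growth_step_right[of n b] assms unfolding domino_step_def by auto
qed

end

section \<open>Parity of the weights in the growth diagram\<close>

lemma Mat_eq_minus_one_iff: "1 \<le> j \<Longrightarrow> Mat \<pi> i j = -1 \<longleftrightarrow> \<pi> i = - int j"
  unfolding Mat_def by auto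

definition row_even_vdoms :: "nat \<Rightarrow> (nat \<Rightarrow> int) \<Rightarrow> nat \<Rightarrow> nat \<Rightarrow> nat" where
  "row_even_vdoms r \<pi> a b = (\<Sum>j<b. vdom_even (growth r \<pi> a (Suc j) - growth r \<pi> a j))"

text \<open>Summing the local parities over the squares of row \<open>i\<close>, the weights of the vertical
  edges telescope.\<close>

lemma growth_row_parity:
  assumes perm: "signed_perm n \<pi>" and "i < n" "b \<le> n"
  shows "even (row_even_vdoms r \<pi> (Suc i) b + row_even_vdoms r \<pi> i b
    + vdom_odd (growth r \<pi> (Suc i) b - growth r \<pi> i b)
    + (\<Sum>j<b. of_bool (Mat \<pi> (Suc i) (Suc j) = -1)))"
  using assms(3)
proof (induction b)
  case (Suc b)
  have "even (vdom_odd (growth r \<pi> (Suc i) b - growth r \<pi> i b)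
      + vdom_even (growth r \<pi> (Suc i) (Suc b) - growth r \<pi> (Suc i) b)
      + vdom_even (growth r \<pi> i (Suc b) - growth r \<pi> i b)
      + vdom_odd (growth r \<pi> (Suc i) (Suc b) - growth r \<pi> i (Suc b))
      + of_bool (Mat \<pi> (Suc i) (Suc b) = -1))"
    using good_square_growth[OF perm, of i b r] assms(2) Suc.prems unfolding good_square_def by simp
  with Suc show ?case
    by (simp only: row_even_vdoms_def sum.lessThan_Suc) presburger
qed (simp add: row_even_vdoms_def)

context
  fixes n :: nat and \<pi> :: "nat \<Rightarrow> int"
  assumes inv: "signed_involution n \<pi>"
begin

lemma signed_involution_perm: "signed_perm n \<pi>"
  using inv unfolding signed_involution_def by simp

lemma signed_involution_cases:
  assumes "i \<in> {1..n}"
  obtains "\<pi> i = int i" | "\<pi> i = - int i" | l where "l \<in> {1..n}" "\<pi> i = int l" "\<pi> l = int i"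
    | l where "l \<in> {1..n}" "\<pi> i = - int l" "\<pi> l = - int i"
  using inv assms unfolding signed_involution_def by blast

lemma signed_involution_pos:
  assumes "i \<in> {1..n}" "\<pi> i = int j"
  shows "\<pi> j = int i"
  using assms(1) by (rule signed_involution_cases) (use assms in auto)

lemma signed_involution_neg:
  assumes "i \<in> {1..n}" "\<pi> i = - int j"
  shows "\<pi> j = - int i"
  using assms(1) by (rule signed_involution_cases) (use assms in auto)

lemma Mat_symmetric:
  assumes "i \<in> {1..n}" "j \<in> {1..n}"
  shows "Mat \<pi> i j = Mat \<pi> j i"
proof -
  have "\<pi> i = int j \<longleftrightarrow> \<pi> j = int i" "\<pi> i = - int j \<longleftrightarrow> \<pi> j = - int i"
    using signed_involution_pos signed_involution_neg assms by blast+
  then show ?thesis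
    by (simp add: Mat_def)
qed

lemma growth_symmetric: "a \<le> n \<Longrightarrow> b \<le> n \<Longrightarrow> growth r \<pi> a b = growth r \<pi> b a"
proof (induction "a + b" arbitrary: a b rule: less_induct)
  case less
  show ?case
  proof (cases "a = 0 \<or> b = 0")
    case False
    then obtain a' b' where ab: "a = Suc a'" "b = Suc b'"
      by (meson not0_implies_Suc)
    have "growth r \<pi> b a = local_rule (Mat \<pi> (Suc a') (Suc b')) (growth r \<pi> a' b')
        (growth r \<pi> a' (Suc b')) (growth r \<pi> (Suc a') b')"
      unfolding ab growth_Suc_Suc using less ab Mat_symmetric[of "Suc a'" "Suc b'"] by simp
    also have "\<dots> = growth r \<pi> a b"
      unfolding ab growth_Suc_Suc using less.prems ab
      by (intro local_rule_swap growth_step_down[OF signed_involution_perm]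
          growth_step_right[OF signed_involution_perm]) auto
    finally show ?thesis ..
  qed auto
qed

lemma growth_diagonal_parity:
  assumes "i < n"
  shows "even (row_even_vdoms r \<pi> (Suc i) (Suc i) + row_even_vdoms r \<pi> i i
    + (\<Sum>j<i. of_bool (Mat \<pi> (Suc i) (Suc j) = -1)))"
proof -
  have "even (vdom_odd (growth r \<pi> (Suc i) i - growth r \<pi> i i)
      + vdom_even (growth r \<pi> (Suc i) (Suc i) - growth r \<pi> (Suc i) i))"
    using good_square_growth[OF signed_involution_perm, of i i r]
      growth_symmetric[of "Suc i" i] assms
    unfolding good_square_def by simp
  then show ?thesis
    using growth_row_parity[OF signed_involution_perm assms less_imp_le[OF assms], of r]
    by (simp only: row_even_vdoms_def sum.lessThan_Suc) presburger
qed

lemma growth_last_row_parity: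
  "even (row_even_vdoms r \<pi> n n + (\<Sum>i<n. \<Sum>j<i. of_bool (Mat \<pi> (Suc i) (Suc j) = -1)))"
proof -
  have "even (row_even_vdoms r \<pi> a a + (\<Sum>i<a. \<Sum>j<i. of_bool (Mat \<pi> (Suc i) (Suc j) = -1)))"
    if "a \<le> n" for a
    using that
  proof (induction a)
    case (Suc a)
    then show ?case
      using growth_diagonal_parity[of a r] by (simp only: sum.lessThan_Suc) presburger
  qed (simp add: row_even_vdoms_def)
  then show ?thesis
    by simp
qed

lemma barred_entry_two_cycle:
  assumes "j < i" "i < n" "Mat \<pi> (Suc i) (Suc j) = -1"
  shows "{Suc i, Suc j} \<in> barred_two_cycles n \<pi>"
proof -
  have ij: "\<pi> (Suc i) = - int (Suc j)"
    using assms(3) Mat_eq_minus_one_iff[of "Suc j" \<pi> "Suc i"] by simp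
  moreover have "\<pi> (Suc j) = - int (Suc i)"
    using signed_involution_neg[OF _ ij] assms(2) by simp
  moreover have "Suc i \<in> {1..n}" "Suc j \<in> {1..n}" "Suc i \<noteq> Suc j"
    using assms(1,2) by auto
  ultimately show ?thesis
    unfolding barred_two_cycles_def by blast
qed

lemma barred_two_cycle_entry:
  assumes "X \<in> barred_two_cycles n \<pi>"
  obtains i j where "X = {Suc i, Suc j}" "j < i" "i < n" "Mat \<pi> (Suc i) (Suc j) = -1"
proof -
  obtain k l where X: "X = {k, l}" "k \<in> {1..n}" "l \<in> {1..n}" "k \<noteq> l"
    and kl: "\<pi> k = - int l" "\<pi> l = - int k"
    using assms unfolding barred_two_cycles_def by blast
  show ?thesis
  proof (cases "l < k")
    case True
    then show ?thesis
      using that[of "k - 1" "l - 1"] X kl by (auto simp: Mat_eq_minus_one_iff)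
  next
    case False
    then show ?thesis
      using that[of "l - 1" "k - 1"] X kl by (auto simp: Mat_eq_minus_one_iff insert_commute)
  qed
qed

lemma card_barred_two_cycles:
  "(\<Sum>i<n. \<Sum>j<i. of_bool (Mat \<pi> (Suc i) (Suc j) = -1)) = card (barred_two_cycles n \<pi>)"
proof -
  define S where "S = (SIGMA i:{..<n}. {..<i} \<inter> {j. Mat \<pi> (Suc i) (Suc j) = -1})"
  have "(\<Sum>i<n. \<Sum>j<i. of_bool (Mat \<pi> (Suc i) (Suc j) = -1)) = card S"
    unfolding S_def by simp
  also have "\<dots> = card ((\<lambda>(i, j). {Suc i, Suc j}) ` S)"
    by (rule card_image[symmetric]) (auto simp: inj_on_def S_def doubleton_eq_iff)
  also have "(\<lambda>(i, j). {Suc i, Suc j}) ` S = barred_two_cycles n \<pi>"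
  proof (intro equalityI subsetI)
    fix X
    assume "X \<in> (\<lambda>(i, j). {Suc i, Suc j}) ` S"
    then show "X \<in> barred_two_cycles n \<pi>"
      unfolding S_def using barred_entry_two_cycle by auto
  next
    fix X
    assume "X \<in> barred_two_cycles n \<pi>"
    then show "X \<in> (\<lambda>(i, j). {Suc i, Suc j}) ` S"
      by (rule barred_two_cycle_entry) (auto simp: S_def)
  qed
  finally show ?thesis .
qed

end

lemma standard_domino_tableau_insertion:
  assumes "signed_perm n \<pi>"
  shows "standard_domino_tableau r n (insertion_tableau r n \<pi>)"
  unfolding standard_domino_tableau_def insertion_tableau_def
  using young_growth[OF assms] growth_last_row_domino[OF assms] by simp

theorem theorem4p4:
  fixes r n d :: nat and \<pi> :: "nat \<Rightarrow> int"
  assumes "r \<in> {0, 1}"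
    and "signed_involution n \<pi>"
    and "card (barred_two_cycles n \<pi>) = d"
  shows "sdt_sign r n (insertion_tableau r n \<pi>) = (-1) ^ d"
proof -
  have r: "r \<le> 1"
    using assms(1) by auto
  have "sdt_sign r n (insertion_tableau r n \<pi>) = (-1) ^ row_even_vdoms r \<pi> n n"
    using sdt_sign_eq_vdom_even[OF r standard_domino_tableau_insertion]
      signed_involution_perm[OF assms(2)]
    by (simp add: row_even_vdoms_def insertion_tableau_def)
  moreover have "even (row_even_vdoms r \<pi> n n + d)"
    using growth_last_row_parity[OF assms(2)] card_barred_two_cycles[OF assms(2)] assms(3) by simp
  ultimately show ?thesis
    using minus_one_power_parity by metis
qed

end
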